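(* Let $n\ge 3$ and consider the representations $\zeta'_i:\mathrm{TVB}_n\to\mathrm{GL}_{n+1}(\mathbb{C})$, $1\le i\le 7$, given by $\zeta'_i(\sigma_k)=L_k(S)$, $\zeta'_i(\rho_k)=L_k(R)$ ($1\le k\le n-1$), $\zeta'_i(\gamma_j)=L_j(G)$ ($1\le j\le n$), where: (1) $\zeta'_1$: $S=\begin{pmatrix}0&b\\ c&0\end{pmatrix}$, $R=\begin{pmatrix}0&-\frac{\sqrt b}{\sqrt c}\\ -\frac{\sqrt c}{\sqrt b}&0\end{pmatrix}$, $G=\mathrm{diag}(-1,1)$; (2) $\zeta'_2$: $S=\begin{pmatrix}0&b\\ c&0\end{pmatrix}$, $R=\begin{pmatrix}0&\frac{\sqrt b}{\sqrt c}\\ \frac{\sqrt c}{\sqrt b}&0\end{pmatrix}$, $G=\mathrm{diag}(-1,1)$; (3) $\zeta'_3$: $S,R$ as in (1), $G=I_2$; (4) $\zeta'_4$: $S,R$ as in (2), $G=I_2$; (5) $\zeta'_5$: $S=I_2$, $R=\begin{pmatrix}0&x\\ \frac1x&0\end{pmatrix}$, $G=\mathrm{diag}(-1,1)$; (6) $\zeta'_6$: $S=I_2$, $R=\begin{pmatrix}0&x\\ \frac1x&0\end{pmatrix}$, $G=I_2$; (7) $\zeta'_7$: $S=R=G=I_2$; with $b,c,x\in\mathbb{C}\setminus\{0\}$ and $\sqrt b,\sqrt c$ square roots of $b,c$. Then every $\zeta'_i$ is reducible to degree $n$: the line spanned by the last standard basis vector $e_{n+1}$ is invariant under all $\zeta'_i(g)$,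 and the subspace $\mathrm{span}(e_1,\dots,e_n)$ is invariant as well. Furthermore, for $1\le i\le 4$, if $bc\neq 1$ then the $n$-dimensional subrepresentation of $\zeta'_i$ on $\mathrm{span}(e_1,\dots,e_n)$ is irreducible (i.e. $\zeta'_i$ is not further reducible).
   Context: For $n\ge 2$, the twisted virtual braid group $\mathrm{TVB}_n$ is the group with generators $\sigma_1,\dots,\sigma_{n-1}$, $\rho_1,\dots,\rho_{n-1}$, $\gamma_1,\dots,\gamma_n$ and defining relations: $\sigma_i\sigma_{i+1}\sigma_i=\sigma_{i+1}\sigma_i\sigma_{i+1}$; $\sigma_i\sigma_j=\sigma_j\sigma_i$ ($|i-j|\ge2$); $\rho_i^2=1$; $\rho_i\rho_j=\rho_j\rho_i$ ($|i-j|\ge 2$); $\rho_i\rho_{i+1}\rho_i=\rho_{i+1}\rho_i\rho_{i+1}$; $\sigma_i\rho_j=\rho_j\sigma_i$ ($|i-j|\ge 2$); $\rho_i\rho_{i+1}\sigma_i=\sigma_{i+1}\rho_i\rho_{i+1}$; $\gamma_i^2=1$; $\gamma_i\gamma_j=\gamma_j\gamma_i$; $\gamma_j\rho_i=\rho_i\gamma_j$ and $\gamma_j\sigma_i=\sigma_i\gamma_j$ ($|i-j|\ge 2$); $\rho_i\gamma_i=\gamma_{i+1}\rho_i$; $\rho_i\sigma_i\rho_i=\gamma_{i+1}\gamma_i\sigma_i\gamma_i\gamma_{i+1}$. For a $2\times2$ matrix $M$ and $1\le i\le n$, $L_i(M)$ denotes the $(n+1)\times(n+1)$ block-diagonal matrix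 $\mathrm{diag}(I_{i-1},M,I_{n-i})$. A representation on $V$ is irreducible if $V$ has no nonzero proper subspace invariant under all the representing matrices. *)

theory Defs
  imports "Jordan_Normal_Form.Matrix"
begin

(* L n i M = diag(I_{i-1}, M, I_{n-i}) as an (n+1)x(n+1) matrix; i is 1-based (1 <= i <= n),
   so the 2x2 block sits at 0-based rows/columns i-1 and i. *)
definition Lmat :: "nat \<Rightarrow> nat \<Rightarrow> complex mat \<Rightarrow> complex mat" where
  "Lmat n i M = mat (n+1) (n+1) (\<lambda>(r,c).
     if i - 1 \<le> r \<and> r \<le> i \<and> i - 1 \<le> c \<and> c \<le> i
     then M $$ (r - (i - 1), c - (i - 1))
     else if r = c then 1 else 0)"

definition mat2 :: "complex \<Rightarrow> complex \<Rightarrow> complex \<Rightarrow> complex \<Rightarrow> complex mat" where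
  "mat2 a b c d = mat 2 2 (\<lambda>(r,s). if r = 0 then (if s = 0 then a else b)
                                        else (if s = 0 then c else d))"

definition S_blk :: "nat \<Rightarrow> complex \<Rightarrow> complex \<Rightarrow> complex mat" where
  "S_blk i b c = (if i \<le> 4 then mat2 0 b c 0 else 1\<^sub>m 2)"

definition R_blk :: "nat \<Rightarrow> complex \<Rightarrow> complex \<Rightarrow> complex \<Rightarrow> complex mat" where
  "R_blk i sb sc x =
     (if i = 1 \<or> i = 3 then mat2 0 (- (sb / sc)) (- (sc / sb)) 0
      else if i = 2 \<or> i = 4 then mat2 0 (sb / sc) (sc / sb) 0
      else if i = 5 \<or> i = 6 then mat2 0 x (1 / x) 0
      else 1\<^sub>m 2)"

definition G_blk :: "nat \<Rightarrow> complex mat" where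
  "G_blk i = (if i = 1 \<or> i = 2 \<or> i = 5 then mat2 (-1) 0 0 1 else 1\<^sub>m 2)"

definition zeta_gens :: "nat \<Rightarrow> nat \<Rightarrow> complex \<Rightarrow> complex \<Rightarrow> complex \<Rightarrow> complex \<Rightarrow> complex
                          \<Rightarrow> complex mat set" where
  "zeta_gens n i b c sb sc x =
     {Lmat n k (S_blk i b c) | k. 1 \<le> k \<and> k \<le> n - 1}
   \<union> {Lmat n k (R_blk i sb sc x) | k. 1 \<le> k \<and> k \<le> n - 1}
   \<union> {Lmat n j (G_blk i) | j. 1 \<le> j \<and> j \<le> n}"

(* subgroup of GL_N(C) generated by a set of matrices: the image zeta(TVB_n) *)
inductive_set gen_group :: "nat \<Rightarrow> complex mat set \<Rightarrow> complex mat set"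
  for N :: nat and A :: "complex mat set" where
  one: "1\<^sub>m N \<in> gen_group N A"
| gen: "M \<in> A \<Longrightarrow> M \<in> gen_group N A"
| mult: "M \<in> gen_group N A \<Longrightarrow> M' \<in> gen_group N A \<Longrightarrow> M * M' \<in> gen_group N A"
| inv: "M \<in> gen_group N A \<Longrightarrow> M' \<in> carrier_mat N N \<Longrightarrow> M * M' = 1\<^sub>m N
          \<Longrightarrow> M' \<in> gen_group N A"

definition zeta_image :: "nat \<Rightarrow> nat \<Rightarrow> complex \<Rightarrow> complex \<Rightarrow> complex \<Rightarrow> complex \<Rightarrow> complex
                          \<Rightarrow> complex mat set" where
  "zeta_image n i b c sb sc x = gen_group (n+1) (zeta_gens n i b c sb sc x)"

definition is_subspace :: "nat \<Rightarrow> complex vec set \<Rightarrow> bool" where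
  "is_subspace N W \<longleftrightarrow> W \<subseteq> carrier_vec N \<and> 0\<^sub>v N \<in> W \<and>
     (\<forall>u\<in>W. \<forall>v\<in>W. u + v \<in> W) \<and> (\<forall>a. \<forall>v\<in>W. a \<cdot>\<^sub>v v \<in> W)"

definition invariant_under :: "complex mat set \<Rightarrow> complex vec set \<Rightarrow> bool" where
  "invariant_under Ms W \<longleftrightarrow> (\<forall>M\<in>Ms. \<forall>v\<in>W. M *\<^sub>v v \<in> W)"

(* line spanned by e_{n+1} (0-based index n) in C^{n+1} *)
definition last_line :: "nat \<Rightarrow> complex vec set" where
  "last_line n = {a \<cdot>\<^sub>v unit_vec (n+1) n | a. True}"

definition first_span :: "nat \<Rightarrow> complex vec set" where
  "first_span n = {v \<in> carrier_vec (n+1). v $ n = 0}"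

definition irreducible_on :: "nat \<Rightarrow> complex mat set \<Rightarrow> complex vec set \<Rightarrow> bool" where
  "irreducible_on N Ms V \<longleftrightarrow>
     (\<forall>W. is_subspace N W \<and> W \<subseteq> V \<and> invariant_under Ms W \<longrightarrow> W = {0\<^sub>v N} \<or> W = V)"

end

(* For k < n the matrix L_k(M) only touches the coordinates k, k+1 <= n, and L_n(G) is diagonal,
   so every generator is block diagonal for the splitting span(e_1..e_n) + C e_(n+1). Block
   diagonal matrices are closed under products and inverses, hence the whole image preserves both
   summands.

   Irreducibility only needs the images A_k = L_k(S) of the sigma_k, where S = [[0,b],[c,0]].
   As S^2 = bc I, the matrix (A_k^2 - I)/(bc - 1) is the coordinate projection onto e_k, e_(k+1).
   Intersections and differences of these projections yield the projection onto each single e_j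
   (this is where n >= 3 enters), so a nonzero invariant subspace of span(e_1..e_n) contains some
   e_j. Since A_k exchanges e_k and e_(k+1) up to the nonzero factors b and c, it then contains
   all of them. *)

theory Submission
  imports Defs "Jordan_Normal_Form.Determinant"
begin

definition block_diag_last :: "nat \<Rightarrow> 'a :: field mat \<Rightarrow> bool" where
  "block_diag_last n M \<longleftrightarrow>
     M \<in> carrier_mat (n+1) (n+1) \<and> (\<forall>r<n. M $$ (n,r) = 0 \<and> M $$ (r,n) = 0)"

lemma block_diag_last_row:
  assumes "block_diag_last n A" "B \<in> carrier_mat (n+1) m" "j < m"
  shows "(A * B) $$ (n,j) = A $$ (n,n) * B $$ (n,j)"
proof -
  have "(A * B) $$ (n,j) = (\<Sum>i\<in>{0..<n+1}. A $$ (n,i) * B $$ (i,j))"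
    using assms by (auto simp: block_diag_last_def scalar_prod_def)
  also have "\<dots> = (\<Sum>i\<in>{0..<n+1}. if i = n then A $$ (n,n) * B $$ (n,j) else 0)"
    using assms(1) by (intro sum.cong) (auto simp: block_diag_last_def)
  finally show ?thesis by simp
qed

lemma block_diag_last_col:
  assumes "block_diag_last n A" "B \<in> carrier_mat m (n+1)" "j < m"
  shows "(B * A) $$ (j,n) = B $$ (j,n) * A $$ (n,n)"
proof -
  have "(B * A) $$ (j,n) = (\<Sum>i\<in>{0..<n+1}. B $$ (j,i) * A $$ (i,n))"
    using assms by (auto simp: block_diag_last_def scalar_prod_def)
  also have "\<dots> = (\<Sum>i\<in>{0..<n+1}. if i = n then B $$ (j,n) * A $$ (n,n) else 0)"
    using assms(1) by (intro sum.cong) (auto simp: block_diag_last_def)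
  finally show ?thesis by simp
qed

lemma block_diag_last_mult:
  assumes "block_diag_last n A" "block_diag_last n B"
  shows "block_diag_last n (A * B)"
  using assms block_diag_last_row[OF assms(1)] block_diag_last_col[OF assms(2)]
  by (auto simp: block_diag_last_def)

lemma block_diag_last_right_inverse:
  assumes A: "block_diag_last n A" and B: "B \<in> carrier_mat (n+1) (n+1)"
    and AB: "A * B = 1\<^sub>m (n+1)"
  shows "block_diag_last n B"
proof -
  have BA: "B * A = 1\<^sub>m (n+1)"
    using mat_mult_left_right_inverse A B AB by (auto simp: block_diag_last_def)
  have row: "A $$ (n,n) * B $$ (n,j) = (if j = n then 1 else 0)" if "j < n+1" for j
    using block_diag_last_row[OF A B that] AB that by (simp add: eq_commute)
  have col: "B $$ (j,n) * A $$ (n,n) = (if j = n then 1 else 0)" if "j < n+1" for j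
    using block_diag_last_col[OF A B that] BA that by (simp add: eq_commute)
  have "A $$ (n,n) \<noteq> 0"
    using row[of n] by auto
  then have "B $$ (n,r) = 0 \<and> B $$ (r,n) = 0" if "r < n" for r
    using row[of r] col[of r] that by simp
  then show ?thesis
    using B by (simp add: block_diag_last_def)
qed

lemma block_diag_last_gen_group:
  assumes "\<forall>M\<in>A. block_diag_last n M" "M \<in> gen_group (n+1) A"
  shows "block_diag_last n M"
  using assms(2)
proof induction
  case one
  show ?case by (auto simp: block_diag_last_def)
next
  case (gen M)
  then show ?case using assms(1) by blast
next
  case (mult M M')
  then show ?case by (simp add: block_diag_last_mult)
next
  case (inv M M')
  then show ?case by (simp add: block_diag_last_right_inverse)
qed

lemma Lmat_carrier [simp]:
  "Lmat n k M \<in> carrier_mat (n+1) (n+1)" "dim_row (Lmat n k M) = n+1" "dim_col (Lmat n k M) = n+1"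
  by (auto simp: Lmat_def)

lemma index_mult_Lmat_vec:
  assumes "1 \<le> k" "k \<le> n" "v \<in> carrier_vec (n+1)" "r < n+1"
  shows "(Lmat n k M *\<^sub>v v) $ r =
    (if r = k-1 then M $$ (0,0) * v $ (k-1) + M $$ (0,1) * v $ k
     else if r = k then M $$ (1,0) * v $ (k-1) + M $$ (1,1) * v $ k
     else v $ r)"
proof -
  have "(Lmat n k M *\<^sub>v v) $ r = (\<Sum>i\<in>{0..<n+1}. Lmat n k M $$ (r,i) * v $ i)"
    using assms by (simp add: scalar_prod_def)
  also have "\<dots> = (\<Sum>i\<in>{0..<n+1}.
      (if i = k-1 then (if r = k-1 then M $$ (0,0) else if r = k then M $$ (1,0) else 0) * v $ i else 0)
    + (if i = k then (if r = k-1 then M $$ (0,1) else if r = k then M $$ (1,1) else 0) * v $ i else 0)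
    + (if i = r \<and> r \<noteq> k-1 \<and> r \<noteq> k then v $ i else 0))"
    using assms by (intro sum.cong) (auto simp: Lmat_def)
  also have "\<dots> = (if r = k-1 then M $$ (0,0) * v $ (k-1) + M $$ (0,1) * v $ k
     else if r = k then M $$ (1,0) * v $ (k-1) + M $$ (1,1) * v $ k else v $ r)"
    using assms by (simp add: sum.distrib)
  finally show ?thesis .
qed

lemma mat2_index [simp]:
  "mat2 a b c d $$ (0,0) = a" "mat2 a b c d $$ (0,1) = b"
  "mat2 a b c d $$ (1,0) = c" "mat2 a b c d $$ (1,1) = d"
  "mat2 a b c d $$ (0,Suc 0) = b" "mat2 a b c d $$ (Suc 0,0) = c"
  "mat2 a b c d $$ (Suc 0,Suc 0) = d"
  by (auto simp: mat2_def)

lemma block_diag_last_Lmat: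
  assumes "1 \<le> k" "k \<le> n" "k = n \<Longrightarrow> M $$ (0,1) = 0 \<and> M $$ (1,0) = 0"
  shows "block_diag_last n (Lmat n k M)"
  using assms by (auto simp: block_diag_last_def Lmat_def)

lemma block_diag_last_zeta_gens:
  assumes "1 \<le> n" "M \<in> zeta_gens n i b c sb sc x"
  shows "block_diag_last n M"
proof -
  have "G_blk i $$ (0,1) = 0 \<and> G_blk i $$ (1,0) = 0"
    by (simp add: G_blk_def)
  then show ?thesis
    using assms by (auto simp: zeta_gens_def intro!: block_diag_last_Lmat)
qed

lemma block_diag_last_mult_unit_vec:
  assumes "block_diag_last n M"
  shows "M *\<^sub>v unit_vec (n+1) n = M $$ (n,n) \<cdot>\<^sub>v unit_vec (n+1) n"
  using assms by (intro eq_vecI) (auto simp: block_diag_last_def)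

lemma block_diag_last_last_line:
  assumes "block_diag_last n M" "w \<in> last_line n"
  shows "M *\<^sub>v w \<in> last_line n"
proof -
  obtain a where w: "w = a \<cdot>\<^sub>v unit_vec (n+1) n"
    using assms(2) by (auto simp: last_line_def)
  have "M \<in> carrier_mat (n+1) (n+1)"
    using assms(1) by (simp add: block_diag_last_def)
  then have "M *\<^sub>v w = (a * M $$ (n,n)) \<cdot>\<^sub>v unit_vec (n+1) n"
    unfolding w using block_diag_last_mult_unit_vec[OF assms(1)]
    by (simp add: mult_mat_vec smult_smult_assoc mult.commute)
  then show ?thesis
    by (auto simp: last_line_def)
qed

lemma block_diag_last_first_span:
  assumes "block_diag_last n M" "w \<in> first_span n"
  shows "M *\<^sub>v w \<in> first_span n"
proof -
  have "(M *\<^sub>v w) $ n = (\<Sum>j\<in>{0..<n+1}. M $$ (n,j) * w $ j)"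
    using assms by (auto simp: block_diag_last_def first_span_def scalar_prod_def)
  also have "\<dots> = 0"
    using assms by (intro sum.neutral) (auto simp: block_diag_last_def first_span_def less_Suc_eq)
  finally show ?thesis
    using assms by (auto simp: block_diag_last_def first_span_def)
qed

lemma zeta_image_invariant:
  assumes "1 \<le> n"
  shows "invariant_under (zeta_image n i b c sb sc x) (last_line n)"
    and "invariant_under (zeta_image n i b c sb sc x) (first_span n)"
  using block_diag_last_gen_group[OF ballI[OF block_diag_last_zeta_gens[OF assms]]]
    block_diag_last_last_line block_diag_last_first_span
  by (auto simp: invariant_under_def zeta_image_def)

definition coord_proj :: "nat \<Rightarrow> nat set \<Rightarrow> 'a :: zero vec \<Rightarrow> 'a vec" where
  "coord_proj N S v = vec N (\<lambda>r. if r \<in> S then v $ r else 0)"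

lemma coord_proj_carrier [simp]:
  "coord_proj N S v \<in> carrier_vec N" "dim_vec (coord_proj N S v) = N"
  by (simp_all add: coord_proj_def)

lemma index_coord_proj [simp]:
  "r < N \<Longrightarrow> coord_proj N S v $ r = (if r \<in> S then v $ r else 0)"
  by (simp add: coord_proj_def)

lemma coord_proj_empty: "coord_proj N {} v = 0\<^sub>v N"
  by (intro eq_vecI) simp_all

lemma coord_proj_coord_proj: "coord_proj N S (coord_proj N T v) = coord_proj N (S \<inter> T) v"
  by (intro eq_vecI) simp_all

lemma coord_proj_Diff:
  "coord_proj N S v + (-1 :: 'a :: ring_1) \<cdot>\<^sub>v coord_proj N (S \<inter> T) v = coord_proj N (S - T) v"
  by (intro eq_vecI) simp_all

lemma coord_proj_insert:
  "j \<notin> S \<Longrightarrow>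
    coord_proj N (insert j S) v = coord_proj N S v + v $ j \<cdot>\<^sub>v (unit_vec N j :: 'a :: semiring_1 vec)"
  by (intro eq_vecI) (auto simp: unit_vec_def)

lemma coord_proj_singleton: "coord_proj N {j} v = v $ j \<cdot>\<^sub>v (unit_vec N j :: 'a :: semiring_1 vec)"
  using coord_proj_insert[of j "{}" N v] by (simp add: coord_proj_empty)

definition coord_proj_closed :: "nat \<Rightarrow> complex vec set \<Rightarrow> nat set \<Rightarrow> bool" where
  "coord_proj_closed N W S \<longleftrightarrow> (\<forall>v\<in>W. coord_proj N S v \<in> W)"

lemma coord_proj_closed_Int:
  "coord_proj_closed N W S \<Longrightarrow> coord_proj_closed N W T \<Longrightarrow> coord_proj_closed N W (S \<inter> T)"
  by (metis coord_proj_closed_def coord_proj_coord_proj)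

lemma coord_proj_closed_Diff:
  assumes "is_subspace N W" "coord_proj_closed N W S" "coord_proj_closed N W T"
  shows "coord_proj_closed N W (S - T)"
  unfolding coord_proj_closed_def
proof
  fix v assume "v \<in> W"
  then have "coord_proj N S v + (-1) \<cdot>\<^sub>v coord_proj N (S \<inter> T) v \<in> W"
    using assms coord_proj_closed_Int[OF assms(2,3)]
    by (simp add: is_subspace_def coord_proj_closed_def)
  then show "coord_proj N (S - T) v \<in> W"
    by (simp add: coord_proj_Diff)
qed

lemma subspace_coord_proj_mem:
  assumes "is_subspace N W" "finite S" "\<forall>j\<in>S. unit_vec N j \<in> W"
  shows "coord_proj N S v \<in> W"
  using assms(2,3)
proof (induction S rule: finite_induct)
  case empty
  then show ?case
    using assms(1) by (simp add: is_subspace_def coord_proj_empty)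
next
  case (insert j S)
  then show ?case
    using assms(1) by (simp add: is_subspace_def coord_proj_insert)
qed

lemma Lmat_antidiag_square:
  assumes "1 \<le> k" "k \<le> n" "v \<in> carrier_vec (n+1)"
  shows "Lmat n k (mat2 0 b c 0) *\<^sub>v (Lmat n k (mat2 0 b c 0) *\<^sub>v v)
    = v + (b * c - 1) \<cdot>\<^sub>v coord_proj (n+1) {k-1, k} v"
proof (rule eq_vecI)
  fix r
  assume "r < dim_vec (v + (b * c - 1) \<cdot>\<^sub>v coord_proj (n+1) {k-1, k} v)"
  then have r: "r < n+1" by simp
  have "Lmat n k (mat2 0 b c 0) *\<^sub>v v \<in> carrier_vec (n+1)"
    using mult_mat_vec_carrier[OF Lmat_carrier(1) assms(3)] .
  then show "(Lmat n k (mat2 0 b c 0) *\<^sub>v (Lmat n k (mat2 0 b c 0) *\<^sub>v v)) $ r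
      = (v + (b * c - 1) \<cdot>\<^sub>v coord_proj (n+1) {k-1, k} v) $ r"
    using assms r by (auto simp: index_mult_Lmat_vec algebra_simps simp del: index_mult_mat_vec)
qed (use assms in simp)

lemma Lmat_antidiag_unit_vec:
  assumes "1 \<le> k" "k \<le> n"
  shows "Lmat n k (mat2 0 b c 0) *\<^sub>v unit_vec (n+1) (k-1) = c \<cdot>\<^sub>v unit_vec (n+1) k"
    and "Lmat n k (mat2 0 b c 0) *\<^sub>v unit_vec (n+1) k = b \<cdot>\<^sub>v unit_vec (n+1) (k-1)"
  by (rule eq_vecI; use assms in \<open>auto simp: index_mult_Lmat_vec simp del: index_mult_mat_vec\<close>)+

lemma antidiag_invariant_coord_proj_closed:
  assumes "b * c \<noteq> 1" "is_subspace (n+1) W" "1 \<le> k" "k \<le> n"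
    and "invariant_under {Lmat n k (mat2 0 b c 0)} W"
  shows "coord_proj_closed (n+1) W {k-1, k}"
  unfolding coord_proj_closed_def
proof
  fix v assume v: "v \<in> W"
  let ?L = "Lmat n k (mat2 0 b c 0)"
  have "(1 / (b * c - 1)) \<cdot>\<^sub>v (?L *\<^sub>v (?L *\<^sub>v v) + (-1) \<cdot>\<^sub>v v) \<in> W"
    using assms(2,5) v by (simp add: is_subspace_def invariant_under_def)
  moreover have "v \<in> carrier_vec (n+1)" "b * c - 1 \<noteq> 0"
    using assms(1,2) v by (auto simp: is_subspace_def)
  then have "(1 / (b * c - 1)) \<cdot>\<^sub>v (?L *\<^sub>v (?L *\<^sub>v v) + (-1) \<cdot>\<^sub>v v) = coord_proj (n+1) {k-1, k} v"
    using assms(3,4) by (intro eq_vecI) (simp_all add: Lmat_antidiag_square field_simps)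
  ultimately show "coord_proj (n+1) {k-1, k} v \<in> W"
    by simp
qed

lemma coord_proj_closed_singleton:
  assumes "3 \<le> n" "is_subspace (n+1) W" "\<forall>k\<in>{1..n-1}. coord_proj_closed (n+1) W {k-1, k}"
    and "j < n"
  shows "coord_proj_closed (n+1) W {j}"
proof -
  have pair: "coord_proj_closed (n+1) W {k-1, k}" if "1 \<le> k" "k \<le> n-1" for k
    using assms(3) that by simp
  consider "j = 0" | "1 \<le> j" "j + 1 \<le> n-1" | "j = n-1"
    using assms(4) by linarith
  then show ?thesis
  proof cases
    case 1
    then have "{j} = {0, 1} - {1, 2}" by auto
    then show ?thesis
      using pair[of 1] pair[of 2] assms(1,2) coord_proj_closed_Diff by fastforce
  next
    case 2
    then have "{j} = {j-1, j} \<inter> {j, j+1}" by auto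
    then show ?thesis
      using pair[of j] pair[of "j+1"] 2 coord_proj_closed_Int by fastforce
  next
    case 3
    then have "{j} = {j-1, j} - {j-2, j-1}" using assms(1) by auto
    moreover have "j - 2 = (j - 1) - 1" by simp
    ultimately show ?thesis
      using pair[of j] pair[of "j-1"] 3 assms(1,2) coord_proj_closed_Diff by fastforce
  qed
qed

lemma neighbour_closed_contains_lessThan:
  fixes J :: "nat set"
  assumes "j \<in> J" "j < n"
    and up: "\<And>m. Suc m < n \<Longrightarrow> m \<in> J \<Longrightarrow> Suc m \<in> J"
    and down: "\<And>m. Suc m < n \<Longrightarrow> Suc m \<in> J \<Longrightarrow> m \<in> J"
  shows "{..<n} \<subseteq> J"
proof -
  have "0 \<in> J"
    using assms(1,2) by (induction j) (auto intro: down)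
  then have "m \<in> J" if "m < n" for m
    using that by (induction m) (auto intro: up)
  then show ?thesis by auto
qed

lemma antidiag_invariant_unit_vecs:
  assumes "b \<noteq> 0" "c \<noteq> 0" "is_subspace (n+1) W"
    and "invariant_under ((\<lambda>k. Lmat n k (mat2 0 b c 0)) ` {1..n-1}) W"
    and "j < n" "unit_vec (n+1) j \<in> W"
  shows "{..<n} \<subseteq> {m. unit_vec (n+1) m \<in> W}"
proof (rule neighbour_closed_contains_lessThan[OF _ assms(5)])
  have smult: "a \<cdot>\<^sub>v v \<in> W" if "v \<in> W" for a v
    using assms(3) that by (simp add: is_subspace_def)
  have L: "Lmat n (Suc m) (mat2 0 b c 0) *\<^sub>v v \<in> W" if "Suc m < n" "v \<in> W" for m v
    using assms(4) that by (auto simp: invariant_under_def)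
  fix m assume m: "Suc m < n"
  show "Suc m \<in> {m. unit_vec (n+1) m \<in> W}" if "m \<in> {m. unit_vec (n+1) m \<in> W}"
    using smult[OF L[OF m that[simplified]], of "1/c"] Lmat_antidiag_unit_vec(1)[of "Suc m" n b c]
      m assms(2)
    by (simp add: smult_smult_assoc)
  show "m \<in> {m. unit_vec (n+1) m \<in> W}" if "Suc m \<in> {m. unit_vec (n+1) m \<in> W}"
    using smult[OF L[OF m that[simplified]], of "1/b"] Lmat_antidiag_unit_vec(2)[of "Suc m" n b c]
      m assms(1)
    by (simp add: smult_smult_assoc)
qed (use assms(6) in simp)

lemma invariant_under_subset:
  "Ms \<subseteq> Ms' \<Longrightarrow> invariant_under Ms' W \<Longrightarrow> invariant_under Ms W"
  by (auto simp: invariant_under_def)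

lemma coord_proj_lessThan_first_span:
  "w \<in> first_span n \<Longrightarrow> coord_proj (n+1) {..<n} w = w"
  by (intro eq_vecI) (auto simp: first_span_def less_Suc_eq)

lemma antidiag_invariant_subspace_trivial:
  assumes "3 \<le> n" "b \<noteq> 0" "c \<noteq> 0" "b * c \<noteq> 1"
    and W: "is_subspace (n+1) W" "W \<subseteq> first_span n"
    and inv: "invariant_under ((\<lambda>k. Lmat n k (mat2 0 b c 0)) ` {1..n-1}) W"
  shows "W = {0\<^sub>v (n+1)} \<or> W = first_span n"
proof (cases "W \<subseteq> {0\<^sub>v (n+1)}")
  case True
  then show ?thesis
    using W(1) by (auto simp: is_subspace_def)
next
  case False
  then obtain v where v: "v \<in> W" "v \<noteq> 0\<^sub>v (n+1)"
    by auto
  obtain j where j: "j < n" "v $ j \<noteq> 0"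
  proof (rule ccontr)
    assume "\<not> thesis"
    then have "coord_proj (n+1) {..<n} v = 0\<^sub>v (n+1)"
      using that by (intro eq_vecI) auto
    then show False
      using v W(2) coord_proj_lessThan_first_span by auto
  qed
  have "coord_proj_closed (n+1) W {k-1, k}" if "k \<in> {1..n-1}" for k
    using inv that
    by (intro antidiag_invariant_coord_proj_closed[OF assms(4) W(1)]) (auto simp: invariant_under_def)
  then have "coord_proj_closed (n+1) W {j}"
    using coord_proj_closed_singleton[OF assms(1) W(1) _ j(1)] by blast
  then have "(1 / v $ j) \<cdot>\<^sub>v (v $ j \<cdot>\<^sub>v unit_vec (n+1) j) \<in> W"
    using v(1) W(1) by (simp add: coord_proj_closed_def coord_proj_singleton is_subspace_def)
  then have "unit_vec (n+1) j \<in> W"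
    using j(2) by (simp add: smult_smult_assoc)
  then have "\<forall>m\<in>{..<n}. unit_vec (n+1) m \<in> W"
    using antidiag_invariant_unit_vecs[OF assms(2,3) W(1) inv j(1)] by blast
  then have "first_span n \<subseteq> W"
    using subspace_coord_proj_mem[OF W(1) finite_lessThan] coord_proj_lessThan_first_span
    by (metis subsetI)
  then show ?thesis
    using W(2) by blast
qed

theorem theorem3p7:
  fixes n :: nat and b c x sb sc :: complex
  assumes "n \<ge> 3" and "b \<noteq> 0" and "c \<noteq> 0" and "x \<noteq> 0"
    and "sb ^ 2 = b" and "sc ^ 2 = c"
  shows "(\<forall>i\<in>{1..7}.
            invariant_under (zeta_image n i b c sb sc x) (last_line n) \<and>
            invariant_under (zeta_image n i b c sb sc x) (first_span n))
       \<and> (b * c \<noteq> 1 \<longrightarrow>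
            (\<forall>i\<in>{1..4}. irreducible_on (n+1) (zeta_image n i b c sb sc x) (first_span n)))"
proof (intro conjI ballI impI)
  fix i
  show "invariant_under (zeta_image n i b c sb sc x) (last_line n)"
    and "invariant_under (zeta_image n i b c sb sc x) (first_span n)"
    using zeta_image_invariant assms(1) by simp_all
next
  fix i :: nat
  assume bc: "b * c \<noteq> 1" and i: "i \<in> {1..4}"
  have "(\<lambda>k. Lmat n k (mat2 0 b c 0)) ` {1..n-1} \<subseteq> zeta_gens n i b c sb sc x"
    using i by (auto simp: zeta_gens_def S_blk_def)
  then have "(\<lambda>k. Lmat n k (mat2 0 b c 0)) ` {1..n-1} \<subseteq> zeta_image n i b c sb sc x"
    unfolding zeta_image_def by (blast intro: gen_group.gen)
  then show "irreducible_on (n+1) (zeta_image n i b c sb sc x) (first_span n)"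
    unfolding irreducible_on_def
    using antidiag_invariant_subspace_trivial[OF assms(1-3) bc] invariant_under_subset by blast
qed

end
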